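(* For all positive integers $N$ and $t$, letting $n=N(2t+2)$, there exist an unweighted directed graph $G=(V,E)$ with $n$ vertices and a subset $S\subseteq V$ with $|S|=N=\Theta(n/t)$ such that $\mathrm{outecc}_G(s)=t+1$ for every $s\in S$, and every subgraph $H=(V,E')$, $E'\subseteq E$, satisfying $\mathrm{outecc}_H(s)<2\,\mathrm{outecc}_G(s)$ for all $s\in S$ contains at least $N^2$ edges, i.e. $\Omega(n^2/t^2)$ edges.
   Context: $d_G(u,v)$ is the directed shortest-path distance and $\mathrm{outecc}_G(x)=\max_{y\in V}d_G(x,y)$. *)

theory Defs
  imports Main "HOL-Library.Extended_Nat"
begin

text \<open>Unweighted directed graphs are given by a finite vertex set V and an edge
relation E \<subseteq> V \<times> V (no self-loops).\<close>

definition dist :: "('a \<times> 'a) set \<Rightarrow> 'a \<Rightarrow> 'a \<Rightarrow> enat" where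
  "dist E u v = (INF k \<in> {k. (u, v) \<in> E ^^ k}. enat k)"

definition outecc :: "'a set \<Rightarrow> ('a \<times> 'a) set \<Rightarrow> 'a \<Rightarrow> enat" where
  "outecc V E x = (SUP y \<in> V. dist E x y)"

end

theory Submission
  imports Defs "HOL-Library.Nat_Bijection"
begin

text \<open>Take \<open>N\<close> gadgets, each a source \<open>s\<^sub>b\<close> on a cycle of length \<open>t + 1\<close> together with
  a path \<open>P\<^sub>b\<close> of \<open>t + 1\<close> vertices, and join every source to the second vertex of every
  cycle and to the first vertex of every path. Each source then reaches everything within
  \<open>t + 1\<close> steps. If a subgraph drops the edge from \<open>s\<^sub>a\<close> to the head of \<open>P\<^sub>j\<close>, the only
  way into \<open>P\<^sub>j\<close> goes through another source, at distance \<open>t + 1\<close> from \<open>s\<^sub>a\<close>, so the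
  end of \<open>P\<^sub>j\<close> is at distance \<open>2t + 2\<close>. Hence all \<open>N\<^sup>2\<close> source-to-path edges must stay.
  The distance lower bounds are certified by potentials that grow by at most one per edge.\<close>

lemma relpow_potential_bound:
  fixes F :: "'a \<Rightarrow> nat"
  assumes "\<forall>(u, v) \<in> R. F v \<le> F u + 1"
  shows "(x, y) \<in> R ^^ k \<Longrightarrow> F y \<le> F x + k"
proof (induction k arbitrary: y)
  case 0
  then show ?case by simp
next
  case (Suc k)
  from Suc.prems obtain z where "(x, z) \<in> R ^^ k" "(z, y) \<in> R" by (rule relpow_Suc_E)
  with Suc.IH assms show ?case by fastforce
qed

lemma dist_le_relpow: "(u, v) \<in> R ^^ k \<Longrightarrow> dist R u v \<le> enat k"
  unfolding dist_def by (rule INF_lower) simp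

lemma potential_le_dist:
  fixes F :: "'a \<Rightarrow> nat"
  assumes "\<forall>(u, v) \<in> R. F v \<le> F u + 1"
  shows "enat (F v - F u) \<le> dist R u v"
  unfolding dist_def
  by (rule INF_greatest) (use relpow_potential_bound[OF assms] in fastforce)

lemma outecc_le: "(\<And>y. y \<in> V \<Longrightarrow> dist R x y \<le> c) \<Longrightarrow> outecc V R x \<le> c"
  unfolding outecc_def by (rule SUP_least)

lemma dist_le_outecc: "y \<in> V \<Longrightarrow> dist R x y \<le> outecc V R x"
  unfolding outecc_def by (rule SUP_upper)

lemma relpow_map_prod_iff:
  assumes "inj g"
  shows "(g x, g y) \<in> (map_prod g g ` R) ^^ k \<longleftrightarrow> (x, y) \<in> R ^^ k"
proof (induction k arbitrary: y)
  case 0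
  then show ?case using assms by (auto dest: injD)
next
  case (Suc k)
  show ?case
  proof
    assume "(g x, g y) \<in> (map_prod g g ` R) ^^ Suc k"
    then obtain w where "(g x, w) \<in> (map_prod g g ` R) ^^ k" "(w, g y) \<in> map_prod g g ` R"
      by (rule relpow_Suc_E)
    moreover from this(2) obtain z where "w = g z" "(z, y) \<in> R"
      using assms by (auto dest: injD)
    ultimately show "(x, y) \<in> R ^^ Suc k" using Suc.IH by auto
  next
    assume "(x, y) \<in> R ^^ Suc k"
    then obtain z where "(x, z) \<in> R ^^ k" "(z, y) \<in> R" by (rule relpow_Suc_E)
    then show "(g x, g y) \<in> (map_prod g g ` R) ^^ Suc k" using Suc.IH by auto
  qed
qed

lemma dist_map_prod: "inj g \<Longrightarrow> dist (map_prod g g ` R) (g x) (g y) = dist R x y"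
  unfolding dist_def by (simp add: relpow_map_prod_iff)

lemma outecc_map_prod: "inj g \<Longrightarrow> outecc (g ` V) (map_prod g g ` R) (g x) = outecc V R x"
  unfolding outecc_def by (simp add: dist_map_prod image_comp)

text \<open>Gadget \<open>b\<close> consists of the source \<open>(b, 0)\<close>, the cycle
  \<open>(b, 0) \<rightarrow> (b, 1) \<rightarrow> \<dots> \<rightarrow> (b, t) \<rightarrow> (b, 0)\<close> and the path
  \<open>(b, t + 1) \<rightarrow> \<dots> \<rightarrow> (b, 2t + 1)\<close>; every source has an edge to \<open>(b, 1)\<close> and to
  \<open>(b, t + 1)\<close> for every \<open>b\<close>.\<close>

definition gadget_vertices :: "nat \<Rightarrow> nat \<Rightarrow> (nat \<times> nat) set" where
  "gadget_vertices N t = {..<N} \<times> {..<2 * t + 2}"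

definition gadget_edges :: "nat \<Rightarrow> nat \<Rightarrow> ((nat \<times> nat) \<times> (nat \<times> nat)) set" where
  "gadget_edges N t =
     {((a, 0), (b, y)) | a b y. a < N \<and> b < N \<and> (y = 1 \<or> y = t + 1)} \<union>
     {((b, m), (b, Suc m)) | b m. b < N \<and> 0 < m \<and> m \<noteq> t \<and> m \<le> 2 * t} \<union>
     {((b, t), (b, 0)) | b. b < N}"

lemma card_gadget_vertices: "card (gadget_vertices N t) = N * (2 * t + 2)"
  unfolding gadget_vertices_def by simp

lemma gadget_edges_subset: "gadget_edges N t \<subseteq> gadget_vertices N t \<times> gadget_vertices N t"
  unfolding gadget_edges_def gadget_vertices_def by auto

lemma finite_gadget_edges: "finite (gadget_edges N t)"
  using gadget_edges_subset by (rule finite_subset) (simp add: gadget_vertices_def)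

lemma gadget_edges_irrefl: "t > 0 \<Longrightarrow> (v, v) \<notin> gadget_edges N t"
  unfolding gadget_edges_def by auto

lemma gadget_path_walk:
  assumes "b < N" "0 < m" "m + r \<le> t \<or> t < m" "m + r \<le> 2 * t + 1"
  shows "((b, m), (b, m + r)) \<in> gadget_edges N t ^^ r"
  using assms(3,4)
proof (induction r)
  case 0
  then show ?case by simp
next
  case (Suc r)
  have "((b, m + r), (b, Suc (m + r))) \<in> gadget_edges N t"
    using assms(1,2) Suc.prems unfolding gadget_edges_def by auto
  with Suc show ?case by auto
qed

lemma gadget_reach:
  assumes "t > 0" "a < N" "(b, m) \<in> gadget_vertices N t"
  shows "\<exists>k \<le> t + 1. ((a, 0), (b, m)) \<in> gadget_edges N t ^^ k"
proof -
  have b: "b < N" and m: "m \<le> 2 * t + 1" using assms(3) unfolding gadget_vertices_def by auto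
  have to_head: "((a, 0), (b, y)) \<in> gadget_edges N t" if "y = 1 \<or> y = t + 1" for y
    using assms(2) b that unfolding gadget_edges_def by auto
  have cycle: "((a, 0), (b, m')) \<in> gadget_edges N t ^^ m'" if "0 < m'" "m' \<le> t" for m'
    using relpow_Suc_I2[OF to_head gadget_path_walk[OF b, of 1 "m' - 1"]] that by simp
  consider "m = 0" "b = a" | "m = 0" "b \<noteq> a" | "0 < m" "m \<le> t" | "t < m" by linarith
  then show ?thesis
  proof cases
    case 1
    then show ?thesis by (intro exI[of _ 0]) auto
  next
    case 2
    have "((b, t), (b, 0)) \<in> gadget_edges N t" using b unfolding gadget_edges_def by auto
    with cycle[OF assms(1) order.refl] 2 show ?thesis
      by (intro exI[of _ "Suc t"]) (auto intro: relpow_Suc_I)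
  next
    case 3
    then show ?thesis using cycle by (intro exI[of _ m]) auto
  next
    case 4
    have "((a, 0), (b, t + 1 + (m - t - 1))) \<in> gadget_edges N t ^^ Suc (m - t - 1)"
      using relpow_Suc_I2[OF to_head gadget_path_walk[OF b, of "t + 1" "m - t - 1"]] m by simp
    with 4 m show ?thesis by (intro exI[of _ "Suc (m - t - 1)"]) auto
  qed
qed

text \<open>A lower bound on the distance from \<open>(a, 0)\<close> in any subgraph avoiding the edges from
  \<open>(a, 0)\<close> to \<open>(j, t + 1)\<close>, \<open>j \<in> J\<close>: the path of gadget \<open>j\<close> can then only be entered from
  another source, which is already at distance \<open>t + 1\<close>.\<close>

definition gadget_potential :: "nat \<Rightarrow> nat \<Rightarrow> nat set \<Rightarrow> nat \<times> nat \<Rightarrow> nat" where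
  "gadget_potential t a J = (\<lambda>(b, m).
     if m = 0 then (if b = a then 0 else t + 1)
     else if m \<le> t then m
     else if b \<in> J then m + 1 else m - t)"

lemma gadget_potential_le_dist:
  assumes "t > 0" "E' \<subseteq> gadget_edges N t" "\<forall>j \<in> J. ((a, 0), (j, t + 1)) \<notin> E'"
  shows "enat (gadget_potential t a J v) \<le> dist E' (a, 0) v"
proof -
  have "\<forall>(u, w) \<in> E'. gadget_potential t a J w \<le> gadget_potential t a J u + 1"
    using assms unfolding gadget_edges_def gadget_potential_def by fastforce
  from potential_le_dist[OF this, of v "(a, 0)"] show ?thesis
    by (simp add: gadget_potential_def)
qed

lemma outecc_gadget:
  assumes "t > 0" "a < N"
  shows "outecc (gadget_vertices N t) (gadget_edges N t) (a, 0) = enat (t + 1)"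
proof (rule antisym)
  show "outecc (gadget_vertices N t) (gadget_edges N t) (a, 0) \<le> enat (t + 1)"
  proof (rule outecc_le)
    fix v assume "v \<in> gadget_vertices N t"
    then obtain k where k: "k \<le> t + 1" "((a, 0), v) \<in> gadget_edges N t ^^ k"
      using gadget_reach[OF assms] by (cases v) blast
    from k(2) have "dist (gadget_edges N t) (a, 0) v \<le> enat k" by (rule dist_le_relpow)
    also have "\<dots> \<le> enat (t + 1)" using k(1) by simp
    finally show "dist (gadget_edges N t) (a, 0) v \<le> enat (t + 1)" .
  qed
next
  have "enat (t + 1) \<le> dist (gadget_edges N t) (a, 0) (a, 2 * t + 1)"
    using gadget_potential_le_dist[OF assms(1) order.refl, where J = "{}" and a = a
        and v = "(a, 2 * t + 1)"]
    by (simp add: gadget_potential_def)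
  also have "\<dots> \<le> outecc (gadget_vertices N t) (gadget_edges N t) (a, 0)"
    using assms(2) by (intro dist_le_outecc) (simp add: gadget_vertices_def)
  finally show "enat (t + 1) \<le> outecc (gadget_vertices N t) (gadget_edges N t) (a, 0)" .
qed

lemma outecc_gadget_subgraph_missing_edge:
  assumes "t > 0" "E' \<subseteq> gadget_edges N t" "j < N" "((a, 0), (j, t + 1)) \<notin> E'"
  shows "enat (2 * t + 2) \<le> outecc (gadget_vertices N t) E' (a, 0)"
proof -
  have "enat (2 * t + 2) \<le> dist E' (a, 0) (j, 2 * t + 1)"
    using gadget_potential_le_dist[OF assms(1,2), where J = "{j}" and a = a and v = "(j, 2 * t + 1)"]
      assms(4)
    by (simp add: gadget_potential_def)
  also have "\<dots> \<le> outecc (gadget_vertices N t) E' (a, 0)"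
    using assms(3) by (intro dist_le_outecc) (simp add: gadget_vertices_def)
  finally show ?thesis .
qed

lemma gadget_sparse_subgraph_card:
  assumes "t > 0" "E' \<subseteq> gadget_edges N t"
    and "\<forall>a < N. outecc (gadget_vertices N t) E' (a, 0)
                  < 2 * outecc (gadget_vertices N t) (gadget_edges N t) (a, 0)"
  shows "N ^ 2 \<le> card E'"
proof -
  let ?head_edge = "\<lambda>(a, j). ((a, 0), (j, t + 1))"
  have "?head_edge ` ({..<N} \<times> {..<N}) \<subseteq> E'"
  proof clarify
    fix a j assume "a < N" "j < N"
    show "((a, 0), (j, t + 1)) \<in> E'"
    proof (rule ccontr)
      assume "((a, 0), (j, t + 1)) \<notin> E'"
      with assms(1,2) \<open>j < N\<close> have "enat (2 * t + 2) \<le> outecc (gadget_vertices N t) E' (a, 0)"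
        by (rule outecc_gadget_subgraph_missing_edge)
      moreover have "2 * enat (t + 1) = enat (2 * t + 2)" by (simp add: numeral_eq_enat)
      ultimately show False using assms(3) outecc_gadget[OF assms(1) \<open>a < N\<close>] \<open>a < N\<close> by auto
    qed
  qed
  moreover have "inj_on ?head_edge ({..<N} \<times> {..<N})" by (auto intro: inj_onI)
  then have "card (?head_edge ` ({..<N} \<times> {..<N})) = N ^ 2"
    by (subst card_image) (simp_all add: power2_eq_square card_cartesian_product)
  moreover have "finite E'"
    using assms(2) finite_gadget_edges by (rule finite_subset)
  ultimately show ?thesis by (metis card_mono)
qed

theorem theorem7p2:
  fixes N t :: nat
  assumes "N > 0" and "t > 0"
  shows "\<exists>(V :: nat set) (E :: (nat \<times> nat) set) S.
           finite V \<and> card V = N * (2 * t + 2) \<and> E \<subseteq> V \<times> V \<and> (\<forall>v. (v, v) \<notin> E) \<and>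
           S \<subseteq> V \<and> card S = N \<and>
           (\<forall>s\<in>S. outecc V E s = enat (t + 1)) \<and>
           (\<forall>E' \<subseteq> E. (\<forall>s\<in>S. outecc V E' s < 2 * outecc V E s) \<longrightarrow> card E' \<ge> N ^ 2)"
proof -
  let ?g = prod_encode and ?G = "map_prod prod_encode prod_encode"
  have inj: "inj ?g" "inj ?G" by (simp_all add: inj_prod_encode prod.inj_map)
  define V where "V = ?g ` gadget_vertices N t"
  define E where "E = ?G ` gadget_edges N t"
  define S where "S = ?g ` ((\<lambda>a. (a, 0)) ` {..<N})"
  have outecc_encoded: "outecc V E' (?g v) = outecc (gadget_vertices N t) E0 v" if "E' = ?G ` E0" for E' E0 v
    unfolding V_def that by (rule outecc_map_prod[OF inj(1)])
  have sparse: "N ^ 2 \<le> card E'"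
    if sub: "E' \<subseteq> E" and ecc: "\<forall>s\<in>S. outecc V E' s < 2 * outecc V E s" for E'
  proof -
    obtain E0 where E0: "E0 \<subseteq> gadget_edges N t" and E': "E' = ?G ` E0"
      using sub unfolding E_def by (rule subset_imageE)
    have "\<forall>a < N. outecc (gadget_vertices N t) E0 (a, 0)
                  < 2 * outecc (gadget_vertices N t) (gadget_edges N t) (a, 0)"
      using ecc outecc_encoded[OF E'] outecc_encoded[OF E_def] unfolding S_def by auto
    with E0 have "N ^ 2 \<le> card E0" by (rule gadget_sparse_subgraph_card[OF assms(2)])
    then show ?thesis
      unfolding E' card_image[OF inj_on_subset[OF inj(2) subset_UNIV]] .
  qed
  have "card V = N * (2 * t + 2)"
    unfolding V_def card_image[OF inj_on_subset[OF inj(1) subset_UNIV]] by (rule card_gadget_vertices)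
  moreover have "finite V" "E \<subseteq> V \<times> V" "\<forall>v. (v, v) \<notin> E"
    using gadget_edges_subset gadget_edges_irrefl[OF assms(2)] inj
    by (auto simp: V_def E_def gadget_vertices_def dest: injD)
  moreover have "S \<subseteq> V" "card S = N" "\<forall>s\<in>S. outecc V E s = enat (t + 1)"
    using outecc_gadget[OF assms(2)] outecc_encoded[OF E_def] inj
    by (auto simp: S_def V_def gadget_vertices_def card_image inj_on_def dest: injD)
  ultimately show ?thesis using sparse by blast
qed

end
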